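(* Let $Y_0$ and $Y_1$ be real-valued random variables on a common probability space, with marginal cumulative distribution functions $F_0$ and $F_1$, and let $Q_j(u)=\inf\{y\in\mathbb{R}: F_j(y)\geq u\}$, $j\in\{0,1\}$, be the left-continuous generalized inverses (quantile functions). Let $U$ be a random variable on the same space with $U\sim U(0,1)$ and $Y_0=Q_0(U)$ (the joint distribution of $(U,Y_1)$ is otherwise arbitrary). Let $0\leq a<b\leq 1$. Then, conditional on the event $\{a<U<b\}$, \[ Q_1(b-U)-Q_0(U)\preceq_{2}Y_1-Y_0\preceq_{2}Q_1(1-b+U)-Q_0(U). \]
   Context: $A\preceq_2 B$ means that the distribution of $A$ is second-order stochastically dominated by that of $B$, i.e. $\mathbb{E}[h(A)]\leq\mathbb{E}[h(B)]$ for every nondecreasing concave function $h:\mathbb{R}\to\mathbb{R}$ (for which the expectations are defined). "Conditional on $a<U<b$" means the comparison is made for the conditional distributions given $\{a<U<b\}$; equivalently, $\mathbb{E}[h(A)\mathbbm{1}\{a<U<b\}]\leq\mathbb{E}[h(B)\mathbbm{1}\{a<U<b\}]$ for all such $h$. *)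

theory Defs
  imports "HOL-Probability.Probability"
begin

definition quantile_fn :: "(real \<Rightarrow> real) \<Rightarrow> real \<Rightarrow> real" where
  "quantile_fn F u = Inf {y. F y \<ge> u}"

text \<open>Second-order stochastic dominance of A by B conditional on the event E,
  in the indicator form E[h(A) 1_E] \<le> E[h(B) 1_E] for every nondecreasing concave h
  for which these expectations are defined (finite).\<close>
definition cond_ssd_le :: "'a measure \<Rightarrow> ('a \<Rightarrow> real) \<Rightarrow> ('a \<Rightarrow> real) \<Rightarrow> 'a set \<Rightarrow> bool" where
  "cond_ssd_le M A B E \<longleftrightarrow>
     (\<forall>h :: real \<Rightarrow> real. mono h \<and> concave_on UNIV h
        \<and> integrable M (\<lambda>x. h (A x) * indicator E x)
        \<and> integrable M (\<lambda>x. h (B x) * indicator E x)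
      \<longrightarrow> (\<integral>x. h (A x) * indicator E x \<partial>M) \<le> (\<integral>x. h (B x) * indicator E x \<partial>M))"

end

theory Submission
  imports Defs
begin

(* Let h be nondecreasing and concave, and first suppose h is C^1 with derivative g, so that g is
   nonnegative and nonincreasing. Then h(R - Z) - h(P - Z) is the integral over all levels s of
   g(s - Z) (1{P <= s < R} - 1{R <= s < P}), so by Tonelli it suffices to compare the two
   one-sided layers at every fixed level s. With Z = Q0(U), the weight g(s - Q0(U)) is a
   nondecreasing function of U. For P = Q1(b - U) the Galois connection of the quantile function
   turns {s < P} into {U < b - F1(s)}, an interval in U whose probability (U being uniform) is at
   most Pr(a < U < b, Y1 > s); the bathtub principle then yields the inequality at level s. The
   coupling Q1(1 - b + U) is handled in the same way. A general h is the pointwise limit of its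
   local averages, which are C^1 and lie between h and h(. + 1), so the inequality passes to the
   limit by dominated convergence. *)

section \<open>Nondecreasing concave functions\<close>

lemma concave_on_increment_antimono:
  fixes h :: "real \<Rightarrow> real"
  assumes "concave_on UNIV h" "x \<le> x'" "0 < d"
  shows "h (x' + d) - h x' \<le> h (x + d) - h x"
proof (cases "x = x'")
  case False
  then have "x < x'" using assms by simp
  define t where "t = (x' - x) / (x' - x + d)"
  have t: "0 \<le> t" "t \<le> 1" "t * (x' - x + d) = x' - x"
    using \<open>x < x'\<close> assms(3) by (auto simp: t_def field_simps)
  have "(1 - t) *\<^sub>R x + t *\<^sub>R (x' + d) = x'" "(1 - t) *\<^sub>R (x' + d) + t *\<^sub>R x = x + d"
    using t(3) by (simp_all add: algebra_simps)
  then have "h x' \<ge> (1 - t) * h x + t * h (x' + d)" "h (x + d) \<ge> (1 - t) * h (x' + d) + t * h x"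
    using concave_onD[OF assms(1) t(1,2), of x "x' + d"] concave_onD[OF assms(1) t(1,2), of "x' + d" x]
    by simp_all
  then show ?thesis by (simp add: algebra_simps)
qed simp

lemma concave_on_continuous:
  fixes h :: "real \<Rightarrow> real"
  assumes "concave_on UNIV h"
  shows "continuous_on UNIV h"
proof -
  have "continuous_on UNIV (\<lambda>x. - h x)"
    using assms by (intro convex_on_continuous) (auto simp: convex_on_iff_concave)
  from continuous_on_minus[OF this] show ?thesis by simp
qed

lemma borel_measurable_concave:
  fixes h :: "real \<Rightarrow> real"
  shows "concave_on UNIV h \<Longrightarrow> h \<in> borel_measurable borel"
  by (intro borel_measurable_continuous_onI concave_on_continuous)

lemma mono_concave_sandwich_bound:
  fixes h :: "real \<Rightarrow> real"
  assumes "concave_on UNIV h" "mono h" "h x \<le> y" "y \<le> h (x + 1)"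
  shows "\<bar>y\<bar> \<le> 2 * \<bar>h x\<bar> + (\<bar>h 1\<bar> + \<bar>h 1 - h 0\<bar>)"
proof (cases "x \<le> 0")
  case True
  then have "h (x + 1) \<le> h 1" using \<open>mono h\<close> by (auto intro: monoD)
  then show ?thesis using assms(3,4) by linarith
next
  case False
  then have "h (x + 1) - h x \<le> h (0 + 1) - h 0"
    by (intro concave_on_increment_antimono[OF assms(1)]) auto
  then show ?thesis using assms(3,4) by simp
qed

lemma local_average_of_continuous:
  fixes h :: "real \<Rightarrow> real"
  assumes "continuous_on UNIV h" "0 < d"
  obtains H where "\<And>x. (H has_real_derivative (h (x + d) - h x) / d) (at x)"
    and "\<And>x. \<exists>z. x < z \<and> z < x + d \<and> H x = h z"
proof -
  have "isCont h x" for x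
    using assms(1) by (simp add: continuous_on_eq_continuous_at)
  then obtain A where "\<And>x. (A has_vector_derivative h x) (at x)"
    using einterval_antiderivative[of "-\<infinity>" "\<infinity>" h] by auto
  then have dA: "(A has_real_derivative h x) (at x)" for x
    by (simp add: has_real_derivative_iff_has_vector_derivative)
  have "((\<lambda>x. x + d) has_real_derivative 1) (at x)" for x
    by (auto intro!: derivative_eq_intros)
  from DERIV_chain2[OF dA this] have "((\<lambda>x. A (x + d)) has_real_derivative h (x + d)) (at x)" for x
    by simp
  then have "((\<lambda>x. (A (x + d) - A x) / d) has_real_derivative (h (x + d) - h x) / d) (at x)" for x
    by (intro DERIV_cdivide DERIV_diff dA)
  moreover have "\<exists>z. x < z \<and> z < x + d \<and> (A (x + d) - A x) / d = h z" for x
  proof -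
    obtain z where "x < z" "z < x + d" "A (x + d) - A x = (x + d - x) * h z"
      using MVT2[of x "x + d" A h] dA assms(2) by auto
    then show ?thesis using assms(2) by auto
  qed
  ultimately show ?thesis by (rule that)
qed

lemma mono_concave_smooth_approx:
  fixes h :: "real \<Rightarrow> real"
  assumes cv: "concave_on UNIV h" and mo: "mono h"
  obtains Hs Gs :: "nat \<Rightarrow> real \<Rightarrow> real" where
    "\<And>n x. (Hs n has_real_derivative Gs n x) (at x)"
    "\<And>n x. 0 \<le> Gs n x" "\<And>n. antimono (Gs n)"
    "\<And>n. Hs n \<in> borel_measurable borel" "\<And>n. Gs n \<in> borel_measurable borel"
    "\<And>n x. h x \<le> Hs n x" "\<And>n x. Hs n x \<le> h (x + 1)"
    "\<And>x. (\<lambda>n. Hs n x) \<longlonglongrightarrow> h x"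
proof -
  have ic: "isCont h x" for x
    using concave_on_continuous[OF cv] by (simp add: continuous_on_eq_continuous_at)
  define d :: "nat \<Rightarrow> real" where "d n = 1 / (real n + 1)" for n
  have d: "0 < d n" "d n \<le> 1" for n by (auto simp: d_def field_simps)
  define Gs where "Gs n x = (h (x + d n) - h x) / d n" for n x
  have "\<exists>H. (\<forall>x. (H has_real_derivative Gs n x) (at x)) \<and> (\<forall>x. \<exists>z. x < z \<and> z < x + d n \<and> H x = h z)"
    for n by (rule local_average_of_continuous[OF concave_on_continuous[OF cv] d(1)]) (auto simp: Gs_def)
  then obtain Hs where deriv: "\<And>n x. (Hs n has_real_derivative Gs n x) (at x)"
    and mean_value: "\<And>n x. \<exists>z. x < z \<and> z < x + d n \<and> Hs n x = h z"
    by metis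
  have nonneg: "0 \<le> Gs n x" for n x
  proof -
    have "h x \<le> h (x + d n)" using d[of n] mo by (auto intro: monoD)
    then show ?thesis using d[of n] by (simp add: Gs_def)
  qed
  have anti: "antimono (Gs n)" for n
  proof (rule antimonoI)
    fix x y :: real assume "x \<le> y"
    then have "h (y + d n) - h y \<le> h (x + d n) - h x"
      using d by (intro concave_on_increment_antimono[OF cv]) auto
    then show "Gs n y \<le> Gs n x" unfolding Gs_def using d[of n] by (simp add: divide_right_mono)
  qed
  then have "mono (\<lambda>x. - Gs n x)" for n
    by (auto simp: mono_def antimono_def)
  then have Gs_meas: "Gs n \<in> borel_measurable borel" for n
    using borel_measurable_mono by fastforce
  have Hs_meas: "Hs n \<in> borel_measurable borel" for n
    using deriv by (intro borel_measurable_continuous_onI) (meson DERIV_isCont continuous_at_imp_continuous_on)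
  have lower: "h x \<le> Hs n x" and upper': "Hs n x \<le> h (x + d n)" for n x
    using mean_value[where n=n and x=x] mo by (auto simp: mono_def)
  have upper: "Hs n x \<le> h (x + 1)" for n x
    using upper'[of n x] d[of n] mo by (meson add_left_mono monoD order_trans)
  have lim: "(\<lambda>n. Hs n x) \<longlonglongrightarrow> h x" for x
  proof (rule tendsto_sandwich[of "\<lambda>n. h x" _ _ "\<lambda>n. h (x + d n)"])
    have "d \<longlonglongrightarrow> 0"
      unfolding d_def using LIMSEQ_inverse_real_of_nat by (simp add: inverse_eq_divide add.commute)
    then have "(\<lambda>n. h (x + d n)) \<longlonglongrightarrow> h (x + 0)"
      by (intro isCont_tendsto_compose[OF ic] tendsto_intros)
    then show "(\<lambda>n. h (x + d n)) \<longlonglongrightarrow> h x" by simp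
  qed (use lower upper' in auto)
  show ?thesis by (rule that[OF deriv nonneg anti Hs_meas Gs_meas lower upper lim])
qed

section \<open>Comparison of integrals level by level\<close>

lemma nn_integral_interval_has_real_derivative:
  fixes H G :: "real \<Rightarrow> real"
  assumes deriv: "\<And>t. (H has_real_derivative G t) (at t)" and nonneg: "\<And>t. 0 \<le> G t"
  shows "(\<integral>\<^sup>+t. ennreal (G t) * indicator {x..<y} t \<partial>lborel) = ennreal (H y - H x)"
proof (cases "x \<le> y")
  case True
  have "(G has_integral H y - H x) {x..y}"
    using fundamental_theorem_of_calculus[OF True, of H G] deriv
    by (auto simp: has_real_derivative_iff_has_vector_derivative[symmetric]
             intro: has_field_derivative_at_within)
  then have "(\<integral>\<^sup>+t. ennreal (G t) * indicator {x..y} t \<partial>lborel) = ennreal (H y - H x)"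
    by (intro nn_integral_has_integral_lebesgue') (use nonneg in auto)
  moreover have "(\<integral>\<^sup>+t. ennreal (G t) * indicator {x..<y} t \<partial>lborel)
      = (\<integral>\<^sup>+t. ennreal (G t) * indicator {x..y} t \<partial>lborel)"
    using AE_lborel_singleton[of y]
    by (intro nn_integral_cong_AE) (auto elim!: eventually_mono simp: indicator_def)
  ultimately show ?thesis by simp
next
  case False
  then have "H y \<le> H x"
    using deriv nonneg by (intro DERIV_nonneg_imp_nondecreasing[of y x H]) auto
  then show ?thesis using False by (simp add: ennreal_neg)
qed

lemma (in sigma_finite_measure) nn_integral_increment_by_layers:
  fixes A B Z :: "'a \<Rightarrow> real" and H G :: "real \<Rightarrow> real"
  assumes [measurable]: "A \<in> borel_measurable M" "B \<in> borel_measurable M" "Z \<in> borel_measurable M"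
      "E \<in> sets M"
    and deriv: "\<And>t. (H has_real_derivative G t) (at t)" and nonneg: "\<And>t. 0 \<le> G t"
    and [measurable]: "G \<in> borel_measurable borel"
  shows "(\<integral>\<^sup>+\<omega>. ennreal ((H (B \<omega> - Z \<omega>) - H (A \<omega> - Z \<omega>)) * indicator E \<omega>) \<partial>M)
       = (\<integral>\<^sup>+s. (\<integral>\<^sup>+\<omega>. ennreal (G (s - Z \<omega>)) * indicator {\<omega>\<in>E. A \<omega> \<le> s \<and> s < B \<omega>} \<omega> \<partial>M) \<partial>lborel)"
proof -
  interpret pair_sigma_finite M lborel
    by (simp add: lborel.sigma_finite_measure_axioms pair_sigma_finite.intro sigma_finite_measure_axioms)
  have inner: "(\<integral>\<^sup>+s. ennreal (G (s - Z \<omega>)) * indicator {\<omega>\<in>E. A \<omega> \<le> s \<and> s < B \<omega>} \<omega> \<partial>lborel)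
      = ennreal ((H (B \<omega> - Z \<omega>) - H (A \<omega> - Z \<omega>)) * indicator E \<omega>)" for \<omega>
  proof (cases "\<omega> \<in> E")
    case True
    have "((\<lambda>t. t - Z \<omega>) has_real_derivative 1) (at t)" for t
      by (auto intro!: derivative_eq_intros)
    from DERIV_chain2[OF deriv this]
    have "((\<lambda>t. H (t - Z \<omega>)) has_real_derivative G (t - Z \<omega>)) (at t)" for t by simp
    from nn_integral_interval_has_real_derivative[OF this, of "A \<omega>" "B \<omega>"] nonneg True
    show ?thesis by (simp add: indicator_def)
  qed simp
  have sets_eq: "sets (M \<Otimes>\<^sub>M lborel) = sets (M \<Otimes>\<^sub>M borel)" by (intro sets_pair_measure_cong) auto
  have "indicator {\<omega>\<in>E. A \<omega> \<le> s \<and> s < B \<omega>} \<omega>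
      = (indicator E \<omega> * (if A \<omega> \<le> s \<and> s < B \<omega> then 1 else 0) :: ennreal)" for \<omega> s
    by (auto simp: indicator_def)
  then have "(\<lambda>(\<omega>, s). ennreal (G (s - Z \<omega>)) * indicator {\<omega>\<in>E. A \<omega> \<le> s \<and> s < B \<omega>} \<omega>)
      \<in> borel_measurable (M \<Otimes>\<^sub>M lborel)"
    unfolding measurable_cong_sets[OF sets_eq refl] by (simp only:) measurable
  from Fubini'[OF this] show ?thesis by (simp add: inner)
qed

lemma (in sigma_finite_measure) integral_mono_by_layers:
  fixes P R Z :: "'a \<Rightarrow> real" and H G :: "real \<Rightarrow> real"
  assumes [measurable]: "P \<in> borel_measurable M" "R \<in> borel_measurable M" "Z \<in> borel_measurable M"
      "E \<in> sets M"
    and deriv: "\<And>t. (H has_real_derivative G t) (at t)" and nonneg: "\<And>t. 0 \<le> G t"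
    and [measurable]: "G \<in> borel_measurable borel"
    and int_P: "integrable M (\<lambda>\<omega>. H (P \<omega> - Z \<omega>) * indicator E \<omega>)"
    and int_R: "integrable M (\<lambda>\<omega>. H (R \<omega> - Z \<omega>) * indicator E \<omega>)"
    and levels: "\<And>s. (\<integral>\<^sup>+\<omega>. ennreal (G (s - Z \<omega>)) * indicator {\<omega>\<in>E. R \<omega> \<le> s \<and> s < P \<omega>} \<omega> \<partial>M)
                   \<le> (\<integral>\<^sup>+\<omega>. ennreal (G (s - Z \<omega>)) * indicator {\<omega>\<in>E. P \<omega> \<le> s \<and> s < R \<omega>} \<omega> \<partial>M)"
  shows "(\<integral>\<omega>. H (P \<omega> - Z \<omega>) * indicator E \<omega> \<partial>M) \<le> (\<integral>\<omega>. H (R \<omega> - Z \<omega>) * indicator E \<omega> \<partial>M)"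
proof -
  define f where "f \<omega> = (H (R \<omega> - Z \<omega>) - H (P \<omega> - Z \<omega>)) * indicator E \<omega>" for \<omega>
  have "(\<integral>\<^sup>+\<omega>. ennreal (- f \<omega>) \<partial>M)
      = (\<integral>\<^sup>+\<omega>. ennreal ((H (P \<omega> - Z \<omega>) - H (R \<omega> - Z \<omega>)) * indicator E \<omega>) \<partial>M)"
    by (simp add: f_def algebra_simps)
  also have "\<dots> = (\<integral>\<^sup>+s. (\<integral>\<^sup>+\<omega>. ennreal (G (s - Z \<omega>)) * indicator {\<omega>\<in>E. R \<omega> \<le> s \<and> s < P \<omega>} \<omega> \<partial>M) \<partial>lborel)"
    by (rule nn_integral_increment_by_layers) (simp_all add: deriv nonneg)
  also have "\<dots> \<le> (\<integral>\<^sup>+s. (\<integral>\<^sup>+\<omega>. ennreal (G (s - Z \<omega>)) * indicator {\<omega>\<in>E. P \<omega> \<le> s \<and> s < R \<omega>} \<omega> \<partial>M) \<partial>lborel)"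
    by (rule nn_integral_mono) (rule levels)
  also have "\<dots> = (\<integral>\<^sup>+\<omega>. ennreal (f \<omega>) \<partial>M)"
    unfolding f_def by (rule nn_integral_increment_by_layers[symmetric]) (simp_all add: deriv nonneg)
  finally have le: "(\<integral>\<^sup>+\<omega>. ennreal (- f \<omega>) \<partial>M) \<le> (\<integral>\<^sup>+\<omega>. ennreal (f \<omega>) \<partial>M)" .
  have int: "integrable M f"
    unfolding f_def left_diff_distrib using int_R int_P by (rule Bochner_Integration.integrable_diff)
  then have "(\<integral>\<^sup>+\<omega>. ennreal (f \<omega>) \<partial>M) < top"
    using integrableD(2) by (simp add: top.not_eq_extremum)
  then have "0 \<le> integral\<^sup>L M f"
    unfolding real_lebesgue_integral_def[OF int] using enn2real_mono[OF le] by simp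
  also have "integral\<^sup>L M f
      = (\<integral>\<omega>. H (R \<omega> - Z \<omega>) * indicator E \<omega> \<partial>M) - (\<integral>\<omega>. H (P \<omega> - Z \<omega>) * indicator E \<omega> \<partial>M)"
    unfolding f_def left_diff_distrib by (rule Bochner_Integration.integral_diff[OF int_R int_P])
  finally show ?thesis by simp
qed

lemma (in finite_measure) integral_mono_of_smooth_approx:
  fixes h :: "real \<Rightarrow> real" and Hs :: "nat \<Rightarrow> real \<Rightarrow> real"
  assumes cv: "concave_on UNIV h" and mo: "mono h"
    and [measurable]: "E \<in> sets M" "X \<in> borel_measurable M" "Y \<in> borel_measurable M"
    and int1: "integrable M (\<lambda>\<omega>. h (X \<omega>) * indicator E \<omega>)"
    and int2: "integrable M (\<lambda>\<omega>. h (Y \<omega>) * indicator E \<omega>)"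
    and [measurable]: "\<And>n. Hs n \<in> borel_measurable borel"
    and lower: "\<And>n x. h x \<le> Hs n x" and upper: "\<And>n x. Hs n x \<le> h (x + 1)"
    and lim: "\<And>x. (\<lambda>n. Hs n x) \<longlonglongrightarrow> h x"
    and smooth_le: "\<And>n. integrable M (\<lambda>\<omega>. Hs n (X \<omega>) * indicator E \<omega>) \<Longrightarrow>
        integrable M (\<lambda>\<omega>. Hs n (Y \<omega>) * indicator E \<omega>) \<Longrightarrow>
        (\<integral>\<omega>. Hs n (X \<omega>) * indicator E \<omega> \<partial>M) \<le> (\<integral>\<omega>. Hs n (Y \<omega>) * indicator E \<omega> \<partial>M)"
  shows "(\<integral>\<omega>. h (X \<omega>) * indicator E \<omega> \<partial>M) \<le> (\<integral>\<omega>. h (Y \<omega>) * indicator E \<omega> \<partial>M)"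
proof -
  have [measurable]: "h \<in> borel_measurable borel" using cv by (rule borel_measurable_concave)
  define C where "C = \<bar>h 1\<bar> + \<bar>h 1 - h 0\<bar>"
  have approx: "(\<forall>n. integrable M (\<lambda>\<omega>. Hs n (W \<omega>) * indicator E \<omega>))
      \<and> (\<lambda>n. \<integral>\<omega>. Hs n (W \<omega>) * indicator E \<omega> \<partial>M) \<longlonglongrightarrow> (\<integral>\<omega>. h (W \<omega>) * indicator E \<omega> \<partial>M)"
    if [measurable]: "W \<in> borel_measurable M" and int: "integrable M (\<lambda>\<omega>. h (W \<omega>) * indicator E \<omega>)" for W
  proof
    let ?w = "\<lambda>\<omega>. 2 * \<bar>h (W \<omega>) * indicator E \<omega>\<bar> + C * indicator E \<omega>"
    have "integrable M (indicator E :: 'a \<Rightarrow> real)"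
      by (intro integrable_real_indicator) (auto simp: emeasure_eq_measure)
    then have w: "integrable M ?w"
      using int by (intro Bochner_Integration.integrable_add integrable_mult_right integrable_abs)
    have dom: "norm (Hs n (W \<omega>) * indicator E \<omega>) \<le> ?w \<omega>" for n \<omega>
      using mono_concave_sandwich_bound[OF cv mo lower[where n=n and x="W \<omega>"] upper[where n=n and x="W \<omega>"]]
      by (auto simp: indicator_def C_def)
    have "\<bar>?w \<omega>\<bar> = ?w \<omega>" for \<omega> by (simp add: C_def)
    then show "\<forall>n. integrable M (\<lambda>\<omega>. Hs n (W \<omega>) * indicator E \<omega>)"
      using dom by (intro allI Bochner_Integration.integrable_bound[OF w]) auto
    have "AE \<omega> in M. (\<lambda>n. Hs n (W \<omega>) * indicator E \<omega>) \<longlonglongrightarrow> h (W \<omega>) * indicator E \<omega>"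
      using lim by (intro AE_I2 tendsto_mult_right)
    then show "(\<lambda>n. \<integral>\<omega>. Hs n (W \<omega>) * indicator E \<omega> \<partial>M) \<longlonglongrightarrow> (\<integral>\<omega>. h (W \<omega>) * indicator E \<omega> \<partial>M)"
      using dom by (intro integral_dominated_convergence[OF _ _ w]) auto
  qed
  show ?thesis
    using approx[OF _ int1] approx[OF _ int2] smooth_le by (auto intro: LIMSEQ_le)
qed

lemma cond_ssd_le_diff_by_layers:
  fixes P R Z :: "'a \<Rightarrow> real"
  assumes "finite_measure M"
    and [measurable]: "P \<in> borel_measurable M" "R \<in> borel_measurable M" "Z \<in> borel_measurable M"
      "E \<in> sets M"
    and levels: "\<And>G s. antimono G \<Longrightarrow>
        (\<integral>\<^sup>+\<omega>. ennreal (G (s - Z \<omega>)) * indicator {\<omega>\<in>E. R \<omega> \<le> s \<and> s < P \<omega>} \<omega> \<partial>M)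
          \<le> (\<integral>\<^sup>+\<omega>. ennreal (G (s - Z \<omega>)) * indicator {\<omega>\<in>E. P \<omega> \<le> s \<and> s < R \<omega>} \<omega> \<partial>M)"
  shows "cond_ssd_le M (\<lambda>\<omega>. P \<omega> - Z \<omega>) (\<lambda>\<omega>. R \<omega> - Z \<omega>) E"
  unfolding cond_ssd_le_def
proof (intro allI impI, elim conjE)
  interpret finite_measure M by fact
  fix h :: "real \<Rightarrow> real"
  assume mo: "mono h" and cv: "concave_on UNIV h"
    and int_P: "integrable M (\<lambda>\<omega>. h (P \<omega> - Z \<omega>) * indicator E \<omega>)"
    and int_R: "integrable M (\<lambda>\<omega>. h (R \<omega> - Z \<omega>) * indicator E \<omega>)"
  obtain Hs Gs :: "nat \<Rightarrow> real \<Rightarrow> real" where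
    deriv: "\<And>n x. (Hs n has_real_derivative Gs n x) (at x)" and
    nonneg: "\<And>n x. 0 \<le> Gs n x" and anti: "\<And>n. antimono (Gs n)" and
    Hs_meas: "\<And>n. Hs n \<in> borel_measurable borel" and Gs_meas: "\<And>n. Gs n \<in> borel_measurable borel" and
    lower: "\<And>n x. h x \<le> Hs n x" and upper: "\<And>n x. Hs n x \<le> h (x + 1)" and
    lim: "\<And>x. (\<lambda>n. Hs n x) \<longlonglongrightarrow> h x"
    by (rule mono_concave_smooth_approx[OF cv mo]) blast
  show "(\<integral>\<omega>. h (P \<omega> - Z \<omega>) * indicator E \<omega> \<partial>M) \<le> (\<integral>\<omega>. h (R \<omega> - Z \<omega>) * indicator E \<omega> \<partial>M)"
  proof (rule integral_mono_of_smooth_approx[where X="\<lambda>\<omega>. P \<omega> - Z \<omega>" and Y="\<lambda>\<omega>. R \<omega> - Z \<omega>",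
        OF cv mo _ _ _ int_P int_R Hs_meas lower upper lim])
    fix n
    assume "integrable M (\<lambda>\<omega>. Hs n (P \<omega> - Z \<omega>) * indicator E \<omega>)"
      and "integrable M (\<lambda>\<omega>. Hs n (R \<omega> - Z \<omega>) * indicator E \<omega>)"
    then show "(\<integral>\<omega>. Hs n (P \<omega> - Z \<omega>) * indicator E \<omega> \<partial>M) \<le> (\<integral>\<omega>. Hs n (R \<omega> - Z \<omega>) * indicator E \<omega> \<partial>M)"
      by (intro integral_mono_by_layers[OF _ _ _ _ deriv nonneg Gs_meas] levels anti) auto
  qed auto
qed

lemma cond_ssd_le_cong_AE:
  fixes A A' B B' :: "'a \<Rightarrow> real"
  assumes "cond_ssd_le M A B E" "AE x in M. A x = A' x" "AE x in M. B x = B' x"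
    and [measurable]: "A \<in> borel_measurable M" "A' \<in> borel_measurable M"
      "B \<in> borel_measurable M" "B' \<in> borel_measurable M" "E \<in> sets M"
  shows "cond_ssd_le M A' B' E"
proof -
  have "integrable M (\<lambda>x. h (X x) * indicator E x) = integrable M (\<lambda>x. h (X' x) * indicator E x)
      \<and> (\<integral>x. h (X x) * indicator E x \<partial>M) = (\<integral>x. h (X' x) * indicator E x \<partial>M)"
    if "concave_on UNIV h" and [measurable]: "X \<in> borel_measurable M" "X' \<in> borel_measurable M"
      and "AE x in M. X x = X' x" for h :: "real \<Rightarrow> real" and X X' :: "'a \<Rightarrow> real"
  proof -
    have [measurable]: "h \<in> borel_measurable borel" using that(1) by (rule borel_measurable_concave)
    have "AE x in M. h (X x) * indicator E x = h (X' x) * indicator E x"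
      using that(4) by eventually_elim simp
    then show ?thesis by (intro conjI integrable_cong_AE integral_cong_AE) auto
  qed
  from this[of _ A A'] this[of _ B B'] show ?thesis
    using assms unfolding cond_ssd_le_def by auto
qed

section \<open>Quantile functions and uniform variables\<close>

lemma quantile_fn_le_iff:
  fixes F :: "real \<Rightarrow> real"
  assumes mono: "mono F" and right_cont: "\<And>a. continuous (at_right a) F"
    and bot: "(F \<longlongrightarrow> 0) at_bot" and top: "(F \<longlongrightarrow> 1) at_top"
    and "0 < v" "v < 1"
  shows "quantile_fn F v \<le> s \<longleftrightarrow> v \<le> F s"
proof -
  let ?S = "{y. v \<le> F y}"
  have "eventually (\<lambda>y. F y > v) at_top" using order_tendstoD(1)[OF top] \<open>v < 1\<close> by simp
  then obtain y where "F y > v" by (auto simp: eventually_at_top_linorder)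
  then have nonempty: "?S \<noteq> {}" by (auto intro!: exI[of _ y])
  have "eventually (\<lambda>y. F y < v) at_bot" using order_tendstoD(2)[OF bot] \<open>0 < v\<close> by simp
  then obtain L where L: "\<And>y. y \<le> L \<Longrightarrow> F y < v" by (auto simp: eventually_at_bot_linorder)
  have bdd: "bdd_below ?S"
  proof (rule bdd_belowI)
    fix y assume "y \<in> ?S"
    then show "L \<le> y" using L[of y] by (cases "y \<le> L") auto
  qed
  have q: "quantile_fn F v = Inf ?S" by (simp add: quantile_fn_def)
  have "v \<le> F (Inf ?S)"
  proof (rule ccontr)
    assume "\<not> v \<le> F (Inf ?S)"
    moreover have "(F \<longlongrightarrow> F (Inf ?S)) (at_right (Inf ?S))"
      using right_cont by (simp add: continuous_within)
    ultimately have "eventually (\<lambda>y. F y < v) (at_right (Inf ?S))" by (simp add: order_tendstoD(2))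
    then obtain b where b: "b > Inf ?S" "\<And>y. Inf ?S < y \<Longrightarrow> y < b \<Longrightarrow> F y < v"
      by (auto simp: eventually_at_right_field)
    obtain y where "y \<in> ?S" "y < b" using cInf_less_iff[OF nonempty bdd] b(1) by auto
    moreover have "Inf ?S \<le> y" using \<open>y \<in> ?S\<close> bdd by (intro cInf_lower)
    ultimately show False using b(2)[of y] \<open>\<not> v \<le> F (Inf ?S)\<close> by (cases "Inf ?S = y") auto
  qed
  then show ?thesis
    unfolding q using mono bdd by (auto intro: cInf_lower order_trans dest: monoD)
qed

context real_distribution
begin

lemma quantile_le_iff_le_cdf:
  "0 < v \<Longrightarrow> v < 1 \<Longrightarrow> quantile_fn (cdf M) v \<le> s \<longleftrightarrow> v \<le> cdf M s"
  by (rule quantile_fn_le_iff[OF _ cdf_is_right_cont cdf_lim_at_bot cdf_lim_at_top_prob])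
     (simp_all add: mono_def cdf_nondecreasing)

lemma quantile_mono:
  assumes "0 < u" "u \<le> u'" "u' < 1"
  shows "quantile_fn (cdf M) u \<le> quantile_fn (cdf M) u'"
proof -
  have "u' \<le> cdf M (quantile_fn (cdf M) u')"
    using quantile_le_iff_le_cdf[of u' "quantile_fn (cdf M) u'"] assms by simp
  then show ?thesis using quantile_le_iff_le_cdf[of u] assms by simp
qed

lemma borel_measurable_quantile: "quantile_fn (cdf M) \<in> borel_measurable borel"
proof (rule borel_measurable_piecewise_mono[of "{{..0}, {0<..<1}, {1}, {1<..}}"])
  fix c :: "real set" assume "c \<in> {{..0}, {0<..<1}, {1}, {1<..}}"
  moreover have "{y. cdf M y \<ge> u} = UNIV" if "u \<le> 0" for u
    using that cdf_nonneg by (auto intro: order_trans)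
  moreover have "{y. cdf M y \<ge> u} = {}" if "u > 1" for u
    using that cdf_bounded_prob by (auto simp: not_le intro: le_less_trans)
  ultimately show "mono_on c (quantile_fn (cdf M))"
    by (auto simp: mono_on_def quantile_fn_def intro: quantile_mono[unfolded quantile_fn_def])
qed auto

end

lemma (in prob_space) borel_measurable_quantile_distr [measurable]:
  "Y \<in> borel_measurable M \<Longrightarrow> quantile_fn (cdf (distr M borel Y)) \<in> borel_measurable borel"
  by (simp add: real_distribution.borel_measurable_quantile)

lemma (in prob_space) cdf_distr_eq_prob:
  assumes "Y \<in> borel_measurable M"
  shows "cdf (distr M borel Y) s = prob {x \<in> space M. Y x \<le> s}"
proof -
  have "cdf (distr M borel Y) s = prob (Y -` {..s} \<inter> space M)"
    unfolding cdf_def by (rule measure_distr[OF assms]) auto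
  also have "Y -` {..s} \<inter> space M = {x \<in> space M. Y x \<le> s}" by auto
  finally show ?thesis .
qed

lemma (in prob_space) prob_uniform_interval:
  assumes "U \<in> borel_measurable M" and uniform: "distr M lborel U = uniform_measure lborel {0<..<1}"
    and "0 \<le> \<alpha>" "\<alpha> \<le> \<beta>" "\<beta> \<le> 1"
  shows "prob {x \<in> space M. \<alpha> < U x \<and> U x < \<beta>} = \<beta> - \<alpha>"
proof -
  have "prob {x \<in> space M. \<alpha> < U x \<and> U x < \<beta>} = measure (distr M lborel U) {\<alpha><..<\<beta>}"
    using assms(1) by (subst measure_distr) (auto intro: arg_cong[where f=prob])
  also have "\<dots> = measure lborel ({0<..<1} \<inter> {\<alpha><..<\<beta>}) / measure lborel {0<..<(1::real)}"
    unfolding uniform by (intro measure_uniform_measure) auto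
  also have "{0<..<1} \<inter> {\<alpha><..<\<beta>} = {\<alpha><..<\<beta>}" using assms by auto
  finally show ?thesis using assms by simp
qed

section \<open>The level inequalities for the quantile couplings\<close>

lemma (in finite_measure) nn_integral_bathtub:
  fixes g :: "'a \<Rightarrow> ennreal"
  assumes [measurable]: "S \<in> sets M" "T \<in> sets M" and "measure M T \<le> measure M S"
    and g: "\<And>x y. x \<in> T - S \<Longrightarrow> y \<in> S - T \<Longrightarrow> g x \<le> g y"
  shows "(\<integral>\<^sup>+x. g x * indicator (T - S) x \<partial>M) \<le> (\<integral>\<^sup>+x. g x * indicator (S - T) x \<partial>M)"
proof -
  \<comment> \<open>\<open>k = \<infinity>\<close> if \<open>S - T = {}\<close>; then \<open>T - S\<close> is a null set and \<open>\<infinity> * 0 = 0\<close>.\<close>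
  define k where "k = (INF y\<in>S - T. g y)"
  have "(\<integral>\<^sup>+x. g x * indicator (T - S) x \<partial>M) \<le> (\<integral>\<^sup>+x. k * indicator (T - S) x \<partial>M)"
    by (intro nn_integral_mono) (auto simp: k_def indicator_def intro: INF_greatest g)
  also have "\<dots> = k * emeasure M (T - S)" by (simp add: nn_integral_cmult_indicator)
  also have "\<dots> \<le> k * emeasure M (S - T)"
  proof -
    have "measure M (T - S) \<le> measure M (S - T)"
      using \<open>measure M T \<le> measure M S\<close> by (simp add: finite_measure_Diff' Int_commute)
    then show ?thesis by (intro mult_left_mono) (simp_all add: emeasure_eq_measure)
  qed
  also have "\<dots> = (\<integral>\<^sup>+x. k * indicator (S - T) x \<partial>M)" by (simp add: nn_integral_cmult_indicator)
  also have "\<dots> \<le> (\<integral>\<^sup>+x. g x * indicator (S - T) x \<partial>M)"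
    by (intro nn_integral_mono) (auto simp: k_def indicator_def intro: INF_lower)
  finally show ?thesis .
qed

lemma (in prob_space) level_ineq_lower_coupling:
  fixes U Y :: "'a \<Rightarrow> real" and a b :: real and \<phi> :: "real \<Rightarrow> real"
  defines "E \<equiv> {x \<in> space M. a < U x \<and> U x < b}" and "Q \<equiv> quantile_fn (cdf (distr M borel Y))"
  assumes [measurable]: "U \<in> borel_measurable M" "Y \<in> borel_measurable M"
    and uniform: "distr M lborel U = uniform_measure lborel {0<..<1}"
    and ab: "0 \<le> a" "a < b" "b \<le> 1" and \<phi>: "mono_on {a<..<b} \<phi>"
  shows "(\<integral>\<^sup>+\<omega>. ennreal (\<phi> (U \<omega>)) * indicator {\<omega>\<in>E. Y \<omega> \<le> s \<and> s < Q (b - U \<omega>)} \<omega> \<partial>M)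
       \<le> (\<integral>\<^sup>+\<omega>. ennreal (\<phi> (U \<omega>)) * indicator {\<omega>\<in>E. Q (b - U \<omega>) \<le> s \<and> s < Y \<omega>} \<omega> \<partial>M)"
proof -
  define c where "c = b - cdf (distr M borel Y) s"
  define T where "T = {\<omega>\<in>E. U \<omega> < c}"
  define S where "S = {\<omega>\<in>E. s < Y \<omega>}"
  have E: "a < U \<omega>" "U \<omega> < b" if "\<omega> \<in> E" for \<omega> using that by (auto simp: E_def)
  have quantile: "Q (b - U \<omega>) \<le> s \<longleftrightarrow> c \<le> U \<omega>" "s < Q (b - U \<omega>) \<longleftrightarrow> U \<omega> < c"
    if "\<omega> \<in> E" for \<omega>
    using real_distribution.quantile_le_iff_le_cdf[of "distr M borel Y" "b - U \<omega>" s] E[OF that] ab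
    by (auto simp: Q_def c_def not_le)
  have "{\<omega>\<in>E. Y \<omega> \<le> s \<and> s < Q (b - U \<omega>)} = T - S" "{\<omega>\<in>E. Q (b - U \<omega>) \<le> s \<and> s < Y \<omega>} = S - T"
    using quantile by (auto simp: T_def S_def)
  moreover have "prob T \<le> prob S"
  proof (cases "c \<le> a")
    case True
    then have "T = {}" using E by (force simp: T_def)
    then show ?thesis by simp
  next
    case False
    have "T = {x \<in> space M. a < U x \<and> U x < min b c}" by (auto simp: T_def E_def)
    then have "prob T = min b c - a"
      using prob_uniform_interval[OF _ uniform, of a "min b c"] ab False by simp
    moreover have "prob S = prob E - prob (E \<inter> {x \<in> space M. Y x \<le> s})"
      by (subst finite_measure_Diff'[symmetric]) (auto simp: S_def E_def intro!: arg_cong[where f=prob])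
    moreover have "prob (E \<inter> {x \<in> space M. Y x \<le> s}) \<le> cdf (distr M borel Y) s"
      unfolding cdf_distr_eq_prob[OF \<open>Y \<in> borel_measurable M\<close>] by (intro finite_measure_mono) auto
    moreover have "prob E = b - a" unfolding E_def using prob_uniform_interval[OF _ uniform] ab by simp
    ultimately show ?thesis by (simp add: c_def)
  qed
  moreover have "ennreal (\<phi> (U x)) \<le> ennreal (\<phi> (U y))" if "x \<in> T - S" "y \<in> S - T" for x y
    using that E by (intro ennreal_leI mono_onD[OF \<phi>]) (auto simp: T_def S_def)
  ultimately show ?thesis
    by (simp only:) (intro nn_integral_bathtub, auto simp: T_def S_def E_def)
qed

lemma (in prob_space) level_ineq_upper_coupling:
  fixes U Y :: "'a \<Rightarrow> real" and a b :: real and \<phi> :: "real \<Rightarrow> real"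
  defines "E \<equiv> {x \<in> space M. a < U x \<and> U x < b}" and "Q \<equiv> quantile_fn (cdf (distr M borel Y))"
  assumes [measurable]: "U \<in> borel_measurable M" "Y \<in> borel_measurable M"
    and uniform: "distr M lborel U = uniform_measure lborel {0<..<1}"
    and ab: "0 \<le> a" "a < b" "b \<le> 1" and \<phi>: "mono_on {a<..<b} \<phi>"
  shows "(\<integral>\<^sup>+\<omega>. ennreal (\<phi> (U \<omega>)) * indicator {\<omega>\<in>E. Q (1 - b + U \<omega>) \<le> s \<and> s < Y \<omega>} \<omega> \<partial>M)
       \<le> (\<integral>\<^sup>+\<omega>. ennreal (\<phi> (U \<omega>)) * indicator {\<omega>\<in>E. Y \<omega> \<le> s \<and> s < Q (1 - b + U \<omega>)} \<omega> \<partial>M)"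
proof -
  define c where "c = cdf (distr M borel Y) s + b - 1"
  define T where "T = {\<omega>\<in>E. c < U \<omega>}"
  define S where "S = {\<omega>\<in>E. s < Y \<omega>}"
  have E: "a < U \<omega>" "U \<omega> < b" if "\<omega> \<in> E" for \<omega> using that by (auto simp: E_def)
  have quantile: "Q (1 - b + U \<omega>) \<le> s \<longleftrightarrow> U \<omega> \<le> c" "s < Q (1 - b + U \<omega>) \<longleftrightarrow> c < U \<omega>"
    if "\<omega> \<in> E" for \<omega>
    using real_distribution.quantile_le_iff_le_cdf[of "distr M borel Y" "1 - b + U \<omega>" s] E[OF that] ab
    by (auto simp: Q_def c_def not_le)
  have "{\<omega>\<in>E. Q (1 - b + U \<omega>) \<le> s \<and> s < Y \<omega>} = S - T" "{\<omega>\<in>E. Y \<omega> \<le> s \<and> s < Q (1 - b + U \<omega>)} = T - S"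
    using quantile by (auto simp: T_def S_def)
  moreover have "prob S \<le> prob T"
  proof -
    have "prob S \<le> prob {x \<in> space M. s < Y x}" by (intro finite_measure_mono) (auto simp: S_def E_def)
    also have "\<dots> = 1 - prob {x \<in> space M. Y x \<le> s}"
      by (subst prob_compl[symmetric]) (auto intro!: arg_cong[where f=prob])
    finally have "prob S \<le> b - c" by (simp add: c_def cdf_distr_eq_prob)
    show ?thesis
    proof (cases "b \<le> c")
      case True
      then have "T = {}" using E by (force simp: T_def)
      then show ?thesis using \<open>prob S \<le> b - c\<close> True by simp
    next
      case False
      have "T = {x \<in> space M. max a c < U x \<and> U x < b}" by (auto simp: T_def E_def)
      then have "prob T = b - max a c"
        using prob_uniform_interval[OF _ uniform, of "max a c" b] ab False by simp
      moreover have "prob S \<le> prob E" by (intro finite_measure_mono) (auto simp: S_def E_def)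
      moreover have "prob E = b - a" unfolding E_def using prob_uniform_interval[OF _ uniform] ab by simp
      ultimately show ?thesis using \<open>prob S \<le> b - c\<close> by simp
    qed
  qed
  moreover have "ennreal (\<phi> (U x)) \<le> ennreal (\<phi> (U y))" if "x \<in> S - T" "y \<in> T - S" for x y
    using that E by (intro ennreal_leI mono_onD[OF \<phi>]) (auto simp: T_def S_def)
  ultimately show ?thesis
    by (simp only:) (intro nn_integral_bathtub, auto simp: T_def S_def E_def)
qed

lemma (in prob_space) cond_ssd_le_lower_coupling:
  fixes U Y :: "'a \<Rightarrow> real" and a b :: real and q :: "real \<Rightarrow> real"
  defines "E \<equiv> {x \<in> space M. a < U x \<and> U x < b}" and "Q \<equiv> quantile_fn (cdf (distr M borel Y))"
  assumes [measurable]: "U \<in> borel_measurable M" "Y \<in> borel_measurable M"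
    and uniform: "distr M lborel U = uniform_measure lborel {0<..<1}"
    and ab: "0 \<le> a" "a < b" "b \<le> 1"
    and [measurable]: "q \<in> borel_measurable borel" and q: "mono_on {0<..<1} q"
  shows "cond_ssd_le M (\<lambda>x. Q (b - U x) - q (U x)) (\<lambda>x. Y x - q (U x)) E"
proof (rule cond_ssd_le_diff_by_layers, goal_cases)
  case (6 G s)
  have "mono_on {a<..<b} (\<lambda>u. G (s - q u))"
    using mono_onD[OF q] ab antimonoD[OF 6] by (intro mono_onI) auto
  from level_ineq_lower_coupling[OF _ _ uniform ab this, of Y s] show ?case by (simp add: E_def Q_def)
qed (auto simp: E_def Q_def intro: finite_measure_axioms)

lemma (in prob_space) cond_ssd_le_upper_coupling:
  fixes U Y :: "'a \<Rightarrow> real" and a b :: real and q :: "real \<Rightarrow> real"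
  defines "E \<equiv> {x \<in> space M. a < U x \<and> U x < b}" and "Q \<equiv> quantile_fn (cdf (distr M borel Y))"
  assumes [measurable]: "U \<in> borel_measurable M" "Y \<in> borel_measurable M"
    and uniform: "distr M lborel U = uniform_measure lborel {0<..<1}"
    and ab: "0 \<le> a" "a < b" "b \<le> 1"
    and [measurable]: "q \<in> borel_measurable borel" and q: "mono_on {0<..<1} q"
  shows "cond_ssd_le M (\<lambda>x. Y x - q (U x)) (\<lambda>x. Q (1 - b + U x) - q (U x)) E"
proof (rule cond_ssd_le_diff_by_layers, goal_cases)
  case (6 G s)
  have "mono_on {a<..<b} (\<lambda>u. G (s - q u))"
    using mono_onD[OF q] ab antimonoD[OF 6] by (intro mono_onI) auto
  from level_ineq_upper_coupling[OF _ _ uniform ab this, of Y s] show ?case by (simp add: E_def Q_def)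
qed (auto simp: E_def Q_def intro: finite_measure_axioms)

theorem theoremA1:
  fixes M :: "'a measure" and Y0 Y1 U :: "'a \<Rightarrow> real" and a b :: real
  assumes "prob_space M"
    and "Y0 \<in> borel_measurable M" and "Y1 \<in> borel_measurable M" and "U \<in> borel_measurable M"
    and "distr M lborel U = uniform_measure lborel {0<..<1}"
    and "AE x in M. Y0 x = quantile_fn (cdf (distr M borel Y0)) (U x)"
    and "0 \<le> a" and "a < b" and "b \<le> 1"
  shows "cond_ssd_le M
           (\<lambda>x. quantile_fn (cdf (distr M borel Y1)) (b - U x) - quantile_fn (cdf (distr M borel Y0)) (U x))
           (\<lambda>x. Y1 x - Y0 x)
           {x \<in> space M. a < U x \<and> U x < b}
       \<and> cond_ssd_le M
           (\<lambda>x. Y1 x - Y0 x)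
           (\<lambda>x. quantile_fn (cdf (distr M borel Y1)) (1 - b + U x) - quantile_fn (cdf (distr M borel Y0)) (U x))
           {x \<in> space M. a < U x \<and> U x < b}"
proof -
  interpret prob_space M by fact
  note [measurable] = assms(2-4)
  let ?Q0 = "quantile_fn (cdf (distr M borel Y0))"
  have "mono_on {0<..<1} ?Q0"
    using real_distribution.quantile_mono[of "distr M borel Y0"] by (intro mono_onI) auto
  note couplings = cond_ssd_le_lower_coupling[OF assms(4,3,5,7-9) _ this]
    cond_ssd_le_upper_coupling[OF assms(4,3,5,7-9) _ this]
  have AE: "AE x in M. Y1 x - ?Q0 (U x) = Y1 x - Y0 x"
    using assms(6) by auto
  show ?thesis
    by (rule conjI[OF cond_ssd_le_cong_AE[OF couplings(1) _ AE] cond_ssd_le_cong_AE[OF couplings(2) AE]])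
       auto
qed

end
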